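(* For $a\in\mathbb{C}_+$ and $f\in\mathcal{B}$ let $(T_{\mathcal{B}}(a)f)(z)=f(z+a)$, $z\in\mathbb{C}_+$. Then $(T_{\mathcal{B}}(a))_{a\in\mathbb{C}_+}$ is a holomorphic $C_0$-semigroup of contractions on $\mathcal{B}$.
   Context: $\mathbb{C}_+=\{z:\Re z>0\}$. $\mathcal{B}$ is the space of holomorphic $f:\mathbb{C}_+\to\mathbb{C}$ with $\|f\|_{\mathcal{B}_0}:=\int_0^\infty\sup_{y\in\mathbb{R}}|f'(x+iy)|\,dx<\infty$, normed by $\|f\|_{\mathcal{B}}=\sup_{z\in\mathbb{C}_+}|f(z)|+\|f\|_{\mathcal{B}_0}$ (a Banach algebra). *)

theory Defs
  imports "HOL-Analysis.Analysis"
begin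

definition C_plus :: "complex set" where
  "C_plus = {z. Re z > 0}"

definition B0_norm :: "(complex \<Rightarrow> complex) \<Rightarrow> ennreal" where
  "B0_norm f = (\<integral>\<^sup>+ x \<in> {0<..}. (SUP y. ennreal (cmod (deriv f (Complex x y)))) \<partial>lborel)"

text \<open>The space B: holomorphic functions on C_plus with finite B0-seminorm.
  Functions are total in HOL; only their values on C_plus matter.\<close>
definition B_space :: "(complex \<Rightarrow> complex) set" where
  "B_space = {f. f holomorphic_on C_plus \<and> B0_norm f < \<infinity>}"

definition B_norm :: "(complex \<Rightarrow> complex) \<Rightarrow> ennreal" where
  "B_norm f = (SUP z \<in> C_plus. ennreal (cmod (f z))) + B0_norm f"

definition B_opnorm :: "((complex \<Rightarrow> complex) \<Rightarrow> (complex \<Rightarrow> complex)) \<Rightarrow> ennreal" where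
  "B_opnorm A = (SUP f \<in> {f \<in> B_space. B_norm f \<le> 1}. B_norm (A f))"

definition sector :: "real \<Rightarrow> complex set" where
  "sector \<psi> = {z. z \<noteq> 0 \<and> \<bar>Arg z\<bar> < \<psi>}"

definition T_B :: "complex \<Rightarrow> (complex \<Rightarrow> complex) \<Rightarrow> (complex \<Rightarrow> complex)" where
  "T_B a f = (\<lambda>z. f (z + a))"

text \<open>A family (T a), a in C_plus, of operators on B is a holomorphic C0-semigroup of
  contractions (on the sector C_plus of angle pi/2) if:
  each T a is a linear map B -> B; T(a+b) = T(a)T(b); ||T a|| <= 1;
  a |-> T a is holomorphic in operator norm on C_plus; and T a f -> f as a -> 0
  within every proper subsector (standard definition, e.g. Arendt-Batty-Hieber-Neubrander 3.7.1).
  Elements of B are identified when they agree on C_plus.\<close>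
definition hol_C0_contraction_semigroup_B ::
  "(complex \<Rightarrow> (complex \<Rightarrow> complex) \<Rightarrow> (complex \<Rightarrow> complex)) \<Rightarrow> bool" where
  "hol_C0_contraction_semigroup_B T \<longleftrightarrow>
     (\<forall>a \<in> C_plus. \<forall>f \<in> B_space. T a f \<in> B_space) \<and>
     (\<forall>a \<in> C_plus. \<forall>f \<in> B_space. \<forall>g \<in> B_space. \<forall>c. \<forall>z \<in> C_plus.
        T a (\<lambda>w. c * f w + g w) z = c * T a f z + T a g z) \<and>
     (\<forall>a \<in> C_plus. \<forall>f \<in> B_space. \<forall>g \<in> B_space. (\<forall>z \<in> C_plus. f z = g z) \<longrightarrow>
        (\<forall>z \<in> C_plus. T a f z = T a g z)) \<and>
     (\<forall>a \<in> C_plus. \<forall>b \<in> C_plus. \<forall>f \<in> B_space. \<forall>z \<in> C_plus.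
        T (a + b) f z = T a (T b f) z) \<and>
     (\<forall>a \<in> C_plus. \<forall>f \<in> B_space. B_norm (T a f) \<le> B_norm f) \<and>
     (\<forall>a0 \<in> C_plus. \<exists>D. (\<forall>f \<in> B_space. D f \<in> B_space) \<and>
        ((\<lambda>a. B_opnorm (\<lambda>f z. (T a f z - T a0 f z) / (a - a0) - D f z)) \<longlongrightarrow> 0)
          (at a0 within C_plus)) \<and>
     (\<forall>\<psi>. 0 < \<psi> \<and> \<psi> < pi / 2 \<longrightarrow> (\<forall>f \<in> B_space.
        ((\<lambda>a. B_norm (\<lambda>z. T a f z - f z)) \<longlongrightarrow> 0) (at 0 within sector \<psi>)))"

end

theory Submission
  imports Defs "HOL-Complex_Analysis.Complex_Analysis"
begin

text \<open>
  Let G(x) be the supremum of |f'| on the vertical line Re z = x, so that the B0-seminorm of f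
  is the integral of G over (0, \<infinity>). Being integrable, G is finite at points arbitrarily close
  to the imaginary axis, so f and f' grow at most linearly on every half-plane Re z \<ge> c > 0,
  and a Phragmen-Lindelof argument shows that G is nonincreasing. Contractivity of the
  translations follows at once. Cauchy's estimates bound the higher derivatives on Re z \<ge> x + r
  by multiples of G(x) / r^n; this makes the difference quotient of a \<mapsto> T(a), minus the
  translate of f', of B-norm O(|a - a0|) uniformly on the unit ball. For a in a sector
  |Arg a| < \<psi> < pi/2 we have |a| \<le> Re a / cos \<psi>, and the B-norm of f(_ + a) - f is bounded by
  integrals of G over intervals (0, \<epsilon>] with \<epsilon> \<rightarrow> 0 plus sqrt |a| times the B0-seminorm of f.
\<close>

section \<open>Holomorphic functions on the right half-plane\<close>

lemma mem_C_plus [simp]: "z \<in> C_plus \<longleftrightarrow> 0 < Re z"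
  by (simp add: C_plus_def)

lemma open_C_plus: "open C_plus"
  by (simp add: C_plus_def open_halfspace_Re_gt)

lemma has_field_derivative_C_plus:
  assumes "f holomorphic_on C_plus" "0 < Re z"
  shows "(f has_field_derivative deriv f z) (at z)"
  using assms open_C_plus holomorphic_derivI by fastforce

lemma holomorphic_on_deriv_C_plus: "f holomorphic_on C_plus \<Longrightarrow> deriv f holomorphic_on C_plus"
  using holomorphic_deriv open_C_plus by blast

lemma continuous_on_deriv_C_plus: "f holomorphic_on C_plus \<Longrightarrow> continuous_on C_plus (deriv f)"
  using holomorphic_on_deriv_C_plus holomorphic_on_imp_continuous_on by blast

lemma has_field_derivative_shift:
  assumes "f holomorphic_on C_plus" "0 < Re (z + a)"
  shows "((\<lambda>z. f (z + a)) has_field_derivative deriv f (z + a)) (at z)"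
proof -
  have "((\<lambda>z. z + a) has_field_derivative 1) (at z)"
    by (auto intro!: derivative_eq_intros)
  from DERIV_chain2[OF has_field_derivative_C_plus[OF assms] this] show ?thesis by simp
qed

lemma deriv_shift:
  assumes "f holomorphic_on C_plus" "0 < Re (z + a)"
  shows "deriv (\<lambda>z. f (z + a)) z = deriv f (z + a)"
  using has_field_derivative_shift[OF assms] by (rule DERIV_imp_deriv)

lemma holomorphic_on_shift:
  assumes "f holomorphic_on C_plus" "0 \<le> Re a"
  shows "(\<lambda>z. f (z + a)) holomorphic_on C_plus"
proof -
  have "(f \<circ> (\<lambda>z. z + a)) holomorphic_on C_plus"
    by (rule holomorphic_on_compose_gen[of _ _ _ C_plus]) (use assms in \<open>auto intro!: holomorphic_intros\<close>)
  then show ?thesis by (simp add: o_def)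
qed

lemma deriv_shift_diff:
  assumes hol: "f holomorphic_on C_plus" and z: "0 < Re z" and a: "0 < Re a"
  shows "deriv (\<lambda>z. f (z + a) - f z) z = deriv f (z + a) - deriv f z"
  by (intro DERIV_imp_deriv DERIV_diff has_field_derivative_shift[OF hol] has_field_derivative_C_plus[OF hol])
    (use z a in simp_all)

lemma deriv_difference_quotient_shift:
  assumes hol: "f holomorphic_on C_plus" and z: "0 < Re z" and a: "0 < Re a" and a0: "0 < Re a0"
  shows "deriv (\<lambda>z. (f (z + a) - f (z + a0)) / (a - a0) - deriv f (z + a0)) z =
    (deriv f (z + a) - deriv f (z + a0)) / (a - a0) - deriv (deriv f) (z + a0)"
proof -
  have d: "((\<lambda>z. f (z + a)) has_field_derivative deriv f (z + a)) (at z)"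
    "((\<lambda>z. f (z + a0)) has_field_derivative deriv f (z + a0)) (at z)"
    "((\<lambda>z. deriv f (z + a0)) has_field_derivative deriv (deriv f) (z + a0)) (at z)"
    using has_field_derivative_shift[OF hol] has_field_derivative_shift[OF holomorphic_on_deriv_C_plus[OF hol]]
      z a a0 by simp_all
  show ?thesis
    by (rule DERIV_imp_deriv[OF DERIV_diff[OF DERIV_cdivide[OF DERIV_diff[OF d(1,2)]] d(3)]])
qed

lemma Re_ge_of_norm_diff_le: "cmod (u - v) \<le> r \<Longrightarrow> Re u - r \<le> Re v"
  using abs_Re_le_cmod[of "u - v"] by simp

lemma ball_subset_C_plus:
  assumes "r \<le> Re w"
  shows "ball w r \<subseteq> C_plus"
proof
  fix u assume "u \<in> ball w r"
  then have "Re (w - u) < r"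
    using complex_Re_le_cmod[of "w - u"] by (simp add: dist_norm)
  then show "u \<in> C_plus"
    using assms by simp
qed

lemma norm_higher_deriv_le_C_plus:
  assumes hol: "f holomorphic_on C_plus" and r: "0 < r" "r < Re u"
    and K: "\<And>v. cmod (u - v) = r \<Longrightarrow> cmod (f v) \<le> K"
  shows "cmod ((deriv ^^ n) f u) \<le> fact n * K / r ^ n"
proof (rule Cauchy_inequality)
  have "cball u r \<subseteq> C_plus"
    using Re_ge_of_norm_diff_le r by (fastforce simp: dist_norm)
  then show "f holomorphic_on ball u r" "continuous_on (cball u r) f"
    using hol ball_subset_cball holomorphic_on_subset holomorphic_on_imp_continuous_on by blast+
qed (use r K in auto)

lemma deriv_linear_growth:
  assumes hol: "f holomorphic_on C_plus" and c: "0 < c" "c < x" and B: "0 \<le> B"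
    and growth: "\<And>w. c \<le> Re w \<Longrightarrow> cmod (f w) \<le> A + B * cmod w"
  obtains A' B' where "\<And>w. x \<le> Re w \<Longrightarrow> cmod (deriv f w) \<le> A' + B' * cmod w"
proof -
  define r where "r = x - c"
  have r: "0 < r"
    using c by (simp add: r_def)
  have "cmod (deriv f w) \<le> (A + B * r) / r + B / r * cmod w" if w: "x \<le> Re w" for w
  proof -
    have "cmod ((deriv ^^ 1) f w) \<le> fact 1 * (A + B * (cmod w + r)) / r ^ 1"
    proof (rule norm_higher_deriv_le_C_plus[OF hol r])
      show "r < Re w"
        using w c by (simp add: r_def)
      fix v assume v: "cmod (w - v) = r"
      then have "c \<le> Re v"
        using Re_ge_of_norm_diff_le[of w v r] w by (simp add: r_def)
      moreover have "cmod v \<le> cmod w + r"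
        using v norm_triangle_ineq2[of v w] by (simp add: norm_minus_commute)
      ultimately show "cmod (f v) \<le> A + B * (cmod w + r)"
        using growth B by (smt (verit) mult_left_mono)
    qed
    then show ?thesis
      using r by (simp add: add_divide_distrib algebra_simps)
  qed
  then show ?thesis
    using that by blast
qed

lemma norm_difference_quotient_minus_deriv_le:
  assumes hol: "f holomorphic_on ball w \<rho>"
    and K: "\<And>u. u \<in> ball w \<rho> \<Longrightarrow> cmod (deriv (deriv f) u) \<le> K"
    and h: "0 < cmod h" "cmod h < \<rho>"
  shows "cmod ((f (w + h) - f w) / h - deriv f w) \<le> K * cmod h"
proof -
  have "0 < \<rho>" using h by (meson norm_ge_zero order_le_less_trans)
  then have w: "w \<in> ball w \<rho>" by simp
  have K0: "0 \<le> K" using K[OF w] norm_ge_zero order_trans by blast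
  have f': "(f has_field_derivative deriv f u) (at u)" if "u \<in> ball w \<rho>" for u
    using hol that holomorphic_derivI by fastforce
  have f'': "(deriv f has_field_derivative deriv (deriv f) u) (at u within ball w \<rho>)"
    if "u \<in> ball w \<rho>" for u
    using holomorphic_deriv[OF hol] that holomorphic_derivI by fastforce
  have lip: "cmod (deriv f u - deriv f w) \<le> K * cmod (u - w)" if "u \<in> ball w \<rho>" for u
    by (rule field_differentiable_bound[OF convex_ball, of _ _ _ "deriv (deriv f)"])
      (use f'' K that w in auto)
  have seg: "closed_segment w (w + h) \<subseteq> ball w \<rho>"
    by (rule closed_segment_subset) (use h w in \<open>auto simp: dist_norm\<close>)
  have "cmod ((f (w + h) - (w + h) * deriv f w) - (f w - w * deriv f w)) \<le> (K * cmod h) * cmod ((w + h) - w)"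
  proof (rule field_differentiable_bound[OF convex_closed_segment])
    fix z assume z: "z \<in> closed_segment w (w + h)"
    then have "((\<lambda>z. f z - z * deriv f w) has_field_derivative (deriv f z - deriv f w)) (at z)"
      using seg f' by (auto intro!: derivative_eq_intros)
    then show "((\<lambda>z. f z - z * deriv f w) has_field_derivative (deriv f z - deriv f w))
        (at z within closed_segment w (w + h))"
      by (rule has_field_derivative_at_within)
    have "cmod (z - w) \<le> cmod h"
      using dist_in_closed_segment[OF z] by (simp add: dist_norm norm_minus_commute)
    then show "cmod (deriv f z - deriv f w) \<le> K * cmod h"
      using lip[of z] z seg K0 by (meson mult_left_mono order_trans subsetD)
  qed auto
  then have "cmod (f (w + h) - f w - h * deriv f w) \<le> K * cmod h * cmod h"
    by (simp add: algebra_simps)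
  moreover have "(f (w + h) - f w) / h - deriv f w = (f (w + h) - f w - h * deriv f w) / h"
    using h by (simp add: field_simps)
  ultimately show ?thesis
    using h by (simp add: norm_divide divide_le_eq)
qed

lemma norm_diff_vertical_le:
  assumes hol: "f holomorphic_on C_plus" and x: "0 < x"
    and M: "\<And>y. cmod (deriv f (Complex x y)) \<le> M"
  shows "cmod (f (Complex x y1) - f (Complex x y2)) \<le> M * \<bar>y1 - y2\<bar>"
proof -
  have "cmod (f (Complex x y1) - f (Complex x y2)) \<le> M * cmod (Complex x y1 - Complex x y2)"
  proof (rule field_differentiable_bound[of "{z. Re z = x}"])
    show "convex {z. Re z = x}"
      by (auto simp: convex_def simp flip: distrib_right)
    fix z assume z: "z \<in> {z. Re z = x}"
    show "(f has_field_derivative deriv f z) (at z within {z. Re z = x})"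
      by (rule has_field_derivative_at_within[OF has_field_derivative_C_plus[OF hol]]) (use z x in simp)
    have "z = Complex x (Im z)"
      using z by (simp add: complex_eq_iff)
    then show "cmod (deriv f z) \<le> M"
      using M by metis
  qed auto
  then show ?thesis by (simp add: cmod_def)
qed

section \<open>A Phragmen-Lindelof principle for half-planes\<close>

lemma norm_one_plus_mult_ge:
  assumes "0 \<le> Re u" "0 \<le> e"
  shows "1 + (e * cmod u)\<^sup>2 \<le> (cmod (1 + of_real e * u))\<^sup>2"
proof -
  have "(cmod (1 + of_real e * u))\<^sup>2 = (1 + e * Re u)\<^sup>2 + (e * Im u)\<^sup>2"
    by (simp only: cmod_power2) (simp add: power2_eq_square algebra_simps)
  moreover have "(cmod u)\<^sup>2 = (Re u)\<^sup>2 + (Im u)\<^sup>2"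
    by (simp add: cmod_power2)
  ultimately show ?thesis
    using assms by (simp add: power2_eq_square algebra_simps)
qed

lemma maximum_modulus_half_disc:
  assumes hol: "k holomorphic_on ({z. c \<le> Re z} \<inter> cball (of_real c) R)"
    and line: "\<And>z. Re z = c \<Longrightarrow> cmod (k z) \<le> M"
    and circle: "\<And>z. c \<le> Re z \<Longrightarrow> cmod (z - of_real c) = R \<Longrightarrow> cmod (k z) \<le> M"
    and z0: "c \<le> Re z0" "cmod (z0 - of_real c) \<le> R"
  shows "cmod (k z0) \<le> M"
proof -
  define H where "H = {z. c \<le> Re z} \<inter> cball (of_real c) R"
  have closed: "closed H"
    unfolding H_def by (intro closed_Int closed_halfspace_Re_ge closed_cball)
  have "frontier {z. c \<le> Re z} = {z. Re z = c}"
    using frontier_halfspace_ge[of "1::complex" c] by simp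
  then have "frontier H \<subseteq> {z. Re z = c} \<union> sphere (of_real c) R"
    using frontier_Int[of "{z. c \<le> Re z}" "cball (of_real c) R"] by (auto simp: H_def)
  moreover have "frontier H \<subseteq> H"
    using closed by (simp add: frontier_subset_closed)
  ultimately have frontier: "Re z = c \<or> (c \<le> Re z \<and> cmod (z - of_real c) = R)" if "z \<in> frontier H" for z
    using that by (auto simp: H_def dist_norm norm_minus_commute)
  have "k holomorphic_on H"
    using hol by (simp add: H_def)
  then show ?thesis
  proof (rule maximum_modulus_frontier[of k H, OF holomorphic_on_subset[OF _ interior_subset]])
    show "continuous_on (closure H) k"
      using \<open>k holomorphic_on H\<close> closure_closed[OF closed] holomorphic_on_imp_continuous_on by simp
    show "bounded H" "z0 \<in> H"
      using z0 by (simp_all add: H_def bounded_Int dist_norm norm_minus_commute)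
    show "cmod (k z) \<le> M" if "z \<in> frontier H" for z
      using frontier[OF that] line circle by blast
  qed
qed

lemma norm_divide_one_plus_mult_sq_le:
  assumes z: "c \<le> Re z" "cmod (z - of_real c) = R" and R: "1 \<le> R" and e: "0 < e"
    and w: "cmod w \<le> A + B * cmod z"
  shows "cmod (w / (1 + of_real e * (z - of_real c))\<^sup>2) \<le> (\<bar>A\<bar> + \<bar>B\<bar> * \<bar>c\<bar> + \<bar>B\<bar>) / (e\<^sup>2 * R)"
proof -
  define C where "C = \<bar>A\<bar> + \<bar>B\<bar> * \<bar>c\<bar> + \<bar>B\<bar>"
  have "cmod z \<le> \<bar>c\<bar> + R"
    using norm_triangle_ineq[of "z - of_real c" "of_real c"] z(2) by simp
  then have "B * cmod z \<le> \<bar>B\<bar> * (\<bar>c\<bar> + R)"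
    by (rule mult_mono[OF abs_ge_self]) auto
  then have "cmod w \<le> \<bar>A\<bar> + \<bar>B\<bar> * (\<bar>c\<bar> + R)"
    using w abs_ge_self[of A] by linarith
  also have "\<dots> \<le> C * R"
    using mult_left_mono[OF R, of "\<bar>A\<bar>"] mult_left_mono[OF R, of "\<bar>B\<bar> * \<bar>c\<bar>"]
    by (simp add: C_def algebra_simps)
  finally have "cmod w \<le> C * R" .
  moreover have "0 \<le> C * R"
    using R by (simp add: C_def)
  moreover have "0 < (e * R)\<^sup>2"
    using e R by simp
  moreover have "(e * R)\<^sup>2 \<le> cmod ((1 + of_real e * (z - of_real c))\<^sup>2)"
    using norm_one_plus_mult_ge[of "z - of_real c" e] z e by (simp add: norm_power)
  ultimately have "cmod (w / (1 + of_real e * (z - of_real c))\<^sup>2) \<le> C * R / (e * R)\<^sup>2"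
    unfolding norm_divide by (intro frac_le)
  also have "\<dots> = C / (e\<^sup>2 * R)"
    using R by (simp add: power2_eq_square)
  finally show ?thesis
    by (simp add: C_def)
qed

text \<open>Maximum modulus for h z / (1 + e (z - c))^2 on a large half-disc: the quadratic
  denominator beats the linear growth of h on the circular arc; then let e \<rightarrow> 0.\<close>

lemma Phragmen_Lindelof_half_plane_approx:
  assumes hol: "h holomorphic_on S" and S: "open S" "{z. c \<le> Re z} \<subseteq> S"
    and growth: "\<And>z. c \<le> Re z \<Longrightarrow> cmod (h z) \<le> A + B * cmod z"
    and line: "\<And>y. cmod (h (Complex c y)) \<le> M"
    and z0: "c \<le> Re z0" and e: "0 < e" and \<eta>: "0 < \<eta>"
  shows "cmod (h z0) \<le> (M + \<eta>) * (cmod (1 + of_real e * (z0 - of_real c)))\<^sup>2"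
proof -
  have M: "0 \<le> M"
    using line[of 0] norm_ge_zero order_trans by blast
  define d :: "complex \<Rightarrow> complex" where "d z = (1 + of_real e * (z - of_real c))\<^sup>2" for z
  have d: "1 \<le> cmod (d z)" if "c \<le> Re z" for z
    using norm_one_plus_mult_ge[of "z - of_real c" e] that e
    by (simp add: d_def norm_power) (smt (verit) zero_le_power2)
  define C where "C = \<bar>A\<bar> + \<bar>B\<bar> * \<bar>c\<bar> + \<bar>B\<bar>"
  define R where "R = max (cmod (z0 - of_real c) + 1) (C / (e\<^sup>2 * (M + \<eta>)))"
  have R: "1 \<le> R" "cmod (z0 - of_real c) \<le> R" "C / (e\<^sup>2 * (M + \<eta>)) \<le> R"
    unfolding R_def by (auto simp: le_max_iff_disj)
  have "cmod (h z0 / d z0) \<le> M + \<eta>"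
  proof (rule maximum_modulus_half_disc[where k = "\<lambda>z. h z / d z" and R = R])
    have "(\<lambda>z. h z / d z) holomorphic_on {z \<in> S. d z \<noteq> 0}"
      unfolding d_def by (intro holomorphic_intros holomorphic_on_subset[OF hol]) auto
    then show "(\<lambda>z. h z / d z) holomorphic_on ({z. c \<le> Re z} \<inter> cball (of_real c) R)"
      by (rule holomorphic_on_subset) (use S d in fastforce)
    show "cmod (h z / d z) \<le> M + \<eta>" if "Re z = c" for z
    proof -
      have "z = Complex c (Im z)"
        using that by (simp add: complex_eq_iff)
      then have "cmod (h z) \<le> M"
        using line by metis
      moreover have "cmod (h z) / cmod (d z) \<le> cmod (h z)"
        using d[of z] that by (simp add: divide_le_eq mult_le_cancel_left1)
      ultimately show ?thesis
        using \<eta> by (simp add: norm_divide)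
    qed
    show "cmod (h z / d z) \<le> M + \<eta>" if "c \<le> Re z" "cmod (z - of_real c) = R" for z
    proof -
      have "cmod (h z / d z) \<le> C / (e\<^sup>2 * R)"
        unfolding d_def C_def by (rule norm_divide_one_plus_mult_sq_le[OF that R(1) e growth[OF that(1)]])
      also have "\<dots> \<le> M + \<eta>"
      proof -
        have "C \<le> R * (e\<^sup>2 * (M + \<eta>))"
          using R(3) e M \<eta> by (simp add: pos_divide_le_eq)
        then show ?thesis
          using R(1) e by (simp add: pos_divide_le_eq algebra_simps)
      qed
      finally show ?thesis .
    qed
  qed (use z0 R in auto)
  then have "cmod (h z0) \<le> (M + \<eta>) * cmod (d z0)"
    using d[OF z0] by (auto simp: norm_divide divide_le_eq split: if_splits)
  then show ?thesis
    by (simp add: d_def norm_power)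
qed

lemma Phragmen_Lindelof_half_plane:
  assumes "h holomorphic_on S" "open S" "{z. c \<le> Re z} \<subseteq> S"
    and "\<And>z. c \<le> Re z \<Longrightarrow> cmod (h z) \<le> A + B * cmod z"
    and "\<And>y. cmod (h (Complex c y)) \<le> M"
    and "c \<le> Re z0"
  shows "cmod (h z0) \<le> M"
proof -
  define u where "u = z0 - of_real c"
  have "((\<lambda>e. (M + e) * (cmod (1 + of_real e * u))\<^sup>2)
      \<longlongrightarrow> (M + 0) * (cmod (1 + of_real 0 * u))\<^sup>2) (at_right 0)"
    by (intro tendsto_intros)
  then have "((\<lambda>e. (M + e) * (cmod (1 + of_real e * u))\<^sup>2) \<longlongrightarrow> M) (at_right 0)"
    by simp
  moreover have "\<forall>\<^sub>F e in at_right 0. cmod (h z0) \<le> (M + e) * (cmod (1 + of_real e * u))\<^sup>2"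
    unfolding u_def
    by (rule eventually_at_rightI[of 0 1]) (auto intro!: Phragmen_Lindelof_half_plane_approx[OF assms])
  ultimately show ?thesis
    by (rule tendsto_lowerbound) simp
qed

section \<open>Suprema of the derivative on vertical lines\<close>

lemma B_space_holomorphic: "f \<in> B_space \<Longrightarrow> f holomorphic_on C_plus"
  by (simp add: B_space_def)

lemma ennreal_le_mult_of_finite:
  assumes "0 < c" and "\<And>K. 0 \<le> K \<Longrightarrow> X = ennreal K \<Longrightarrow> a \<le> c * K"
  shows "ennreal a \<le> ennreal c * X"
  using assms by (cases X rule: ennreal_cases) (auto simp: ennreal_mult_top ennreal_mult[symmetric] intro: ennreal_leI)

definition deriv_line_sup :: "(complex \<Rightarrow> complex) \<Rightarrow> real \<Rightarrow> ennreal" where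
  "deriv_line_sup f x = (SUP y. ennreal (cmod (deriv f (Complex x y))))"

lemma B0_norm_eq_nn_integral_deriv_line_sup:
  "B0_norm f = (\<integral>\<^sup>+ x \<in> {0<..}. deriv_line_sup f x \<partial>lborel)"
  by (simp add: B0_norm_def deriv_line_sup_def)

lemma norm_deriv_le_deriv_line_sup: "Re z = x \<Longrightarrow> ennreal (cmod (deriv f z)) \<le> deriv_line_sup f x"
  unfolding deriv_line_sup_def by (rule SUP_upper2[of "Im z"]) (auto simp: complex_eq_iff)

lemma norm_deriv_le_of_deriv_line_sup_eq:
  assumes "deriv_line_sup f x = ennreal M" "0 \<le> M" "Re z = x"
  shows "cmod (deriv f z) \<le> M"
  using norm_deriv_le_deriv_line_sup[OF assms(3), of f] assms(1,2) by simp

lemma deriv_line_sup_eq_SUP_Rats: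
  assumes hol: "f holomorphic_on C_plus" and x: "0 < x"
  shows "deriv_line_sup f x = (SUP q\<in>\<rat>. ennreal (cmod (deriv f (Complex x q))))"
proof (rule antisym)
  define S where "S = (SUP q\<in>\<rat>. ennreal (cmod (deriv f (Complex x q))))"
  have "continuous_on UNIV (\<lambda>y. deriv f (Complex x y))"
    by (rule continuous_on_compose2[OF continuous_on_deriv_C_plus[OF hol]])
      (use x in \<open>auto simp: Complex_eq intro!: continuous_intros\<close>)
  then have "closed {y. ennreal (cmod (deriv f (Complex x y))) \<le> S}"
    by (intro closed_Collect_le continuous_on_ennreal continuous_on_norm continuous_on_const)
  moreover have "\<rat> \<subseteq> {y. ennreal (cmod (deriv f (Complex x y))) \<le> S}"
    unfolding S_def by (auto intro: SUP_upper)
  ultimately have "closure \<rat> \<subseteq> {y. ennreal (cmod (deriv f (Complex x y))) \<le> S}"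
    by (rule closure_minimal[rotated])
  then show "deriv_line_sup f x \<le> S"
    unfolding deriv_line_sup_def by (intro SUP_least) (auto simp: Rats_closure_real)
  show "S \<le> deriv_line_sup f x"
    unfolding S_def deriv_line_sup_def by (rule SUP_subset_mono) auto
qed

lemma borel_measurable_deriv_line_sup:
  assumes hol: "f holomorphic_on C_plus" and A: "A \<in> sets borel" "A \<subseteq> {0<..}"
  shows "(\<lambda>x. deriv_line_sup f x * indicator A x) \<in> borel_measurable borel"
proof -
  have eq: "(\<lambda>x. deriv_line_sup f x * indicator {0<..} x) =
     (\<lambda>x. SUP q\<in>\<rat>. ennreal (indicator {0<..} x *\<^sub>R cmod (deriv f (Complex x q))))"
    by (rule ext) (auto simp: deriv_line_sup_eq_SUP_Rats[OF hol] indicator_def SUP_constant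
        bot_ennreal Rats_0)
  have "continuous_on {0<..} (\<lambda>x. deriv f (Complex x q))" for q
    by (rule continuous_on_compose2[OF continuous_on_deriv_C_plus[OF hol]])
      (auto simp: Complex_eq intro!: continuous_intros)
  then have m: "(\<lambda>x. indicator {0<..} x *\<^sub>R cmod (deriv f (Complex x q))) \<in> borel_measurable borel"
    for q
    by (intro borel_measurable_continuous_on_indicator continuous_intros) auto
  then have "(\<lambda>x. deriv_line_sup f x * indicator {0<..} x) \<in> borel_measurable borel"
    unfolding eq by (intro borel_measurable_SUP countable_rat) (use m in measurable)
  moreover have "(\<lambda>x. deriv_line_sup f x * indicator A x) =
      (\<lambda>x. deriv_line_sup f x * indicator {0<..} x * indicator A x)"
    using A(2) by (auto simp: indicator_def fun_eq_iff)
  ultimately show ?thesis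
    using A(1) by simp
qed

lemma norm_diff_horizontal_le:
  assumes hol: "f holomorphic_on C_plus" and "0 < x1" "x1 \<le> x2"
  shows "ennreal (cmod (f (Complex x2 y) - f (Complex x1 y)))
    \<le> (\<integral>\<^sup>+ t\<in>{x1..x2}. deriv_line_sup f t \<partial>lborel)"
proof -
  define g where "g t = deriv f (Complex t y)" for t
  have "((\<lambda>t. f (Complex t y)) has_vector_derivative g t) (at t within {x1..x2})"
    if "t \<in> {x1..x2}" for t
  proof -
    have "((\<lambda>t. Complex t y) has_vector_derivative 1) (at t within {x1..x2})"
      unfolding Complex_eq by (auto intro!: derivative_eq_intros)
    moreover have "(f has_field_derivative g t) (at (Complex t y))"
      unfolding g_def by (rule has_field_derivative_C_plus[OF hol]) (use that \<open>0 < x1\<close> in auto)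
    ultimately show ?thesis
      using field_vector_diff_chain_within has_field_derivative_at_within by (fastforce simp: o_def)
  qed
  then have ftc: "(g has_integral (f (Complex x2 y) - f (Complex x1 y))) {x1..x2}"
    by (rule fundamental_theorem_of_calculus[OF \<open>x1 \<le> x2\<close>])
  have "continuous_on {x1..x2} g"
    unfolding g_def by (rule continuous_on_compose2[OF continuous_on_deriv_C_plus[OF hol]])
      (use \<open>0 < x1\<close> in \<open>auto simp: Complex_eq intro!: continuous_intros\<close>)
  then have int: "(\<lambda>t. cmod (g t)) integrable_on {x1..x2}"
    by (intro integrable_continuous_interval continuous_intros)
  have "cmod (f (Complex x2 y) - f (Complex x1 y)) \<le> integral {x1..x2} (\<lambda>t. cmod (g t))"
    using integral_norm_bound_integral[OF has_integral_integrable[OF ftc] int] integral_unique[OF ftc]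
    by simp
  then have "ennreal (cmod (f (Complex x2 y) - f (Complex x1 y)))
      \<le> ennreal (integral {x1..x2} (\<lambda>t. cmod (g t)))"
    by (rule ennreal_leI)
  also have "\<dots> = (\<integral>\<^sup>+ t\<in>{x1..x2}. ennreal (cmod (g t)) \<partial>lborel)"
    by (rule nn_integral_has_integral_lebesgue'[symmetric]) (use int in \<open>auto dest: integrable_integral\<close>)
  also have "\<dots> \<le> (\<integral>\<^sup>+ t\<in>{x1..x2}. deriv_line_sup f t \<partial>lborel)"
    unfolding g_def by (intro nn_integral_mono mult_right_mono norm_deriv_le_deriv_line_sup) auto
  finally show ?thesis .
qed

lemma B_space_deriv_line_sup_finite_below:
  assumes fB: "f \<in> B_space" and x: "0 < x"
  obtains c where "0 < c" "c < x" "deriv_line_sup f c < \<infinity>"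
proof -
  have "\<not> (\<forall>c\<in>{0<..<x}. deriv_line_sup f c = \<infinity>)"
  proof
    assume inf: "\<forall>c\<in>{0<..<x}. deriv_line_sup f c = \<infinity>"
    have "(\<integral>\<^sup>+ c. \<infinity> * indicator {0<..<x} c \<partial>lborel) \<le> B0_norm f"
      unfolding B0_norm_eq_nn_integral_deriv_line_sup
      by (intro nn_integral_mono) (auto simp: indicator_def inf)
    moreover have "(\<integral>\<^sup>+ c. \<infinity> * indicator {0<..<x} c \<partial>lborel) = \<infinity>"
      using x by (simp add: nn_integral_cmult_indicator ennreal_mult_top)
    ultimately show False
      using fB by (simp add: B_space_def top_unique)
  qed
  then show ?thesis
    using that by (auto simp: less_top)
qed

lemma B_space_linear_growth:
  assumes fB: "f \<in> B_space" and c: "0 < c" and M: "\<And>y. cmod (deriv f (Complex c y)) \<le> M"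
  obtains A where "\<And>w. c \<le> Re w \<Longrightarrow> cmod (f w) \<le> A + M * cmod w"
proof -
  note hol = B_space_holomorphic[OF fB]
  obtain B0 where B0: "B0_norm f = ennreal B0" "0 \<le> B0"
    using fB by (cases "B0_norm f" rule: ennreal_cases) (auto simp: B_space_def)
  have "cmod (f w) \<le> (cmod (f (Complex c 0)) + B0) + M * cmod w" if w: "c \<le> Re w" for w
  proof -
    have "ennreal (cmod (f (Complex (Re w) (Im w)) - f (Complex c (Im w))))
        \<le> (\<integral>\<^sup>+ t\<in>{c..Re w}. deriv_line_sup f t \<partial>lborel)"
      by (rule norm_diff_horizontal_le[OF hol c w])
    also have "\<dots> \<le> B0_norm f"
      unfolding B0_norm_eq_nn_integral_deriv_line_sup
      by (intro nn_integral_mono) (use c in \<open>auto simp: indicator_def\<close>)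
    finally have "cmod (f w - f (Complex c (Im w))) \<le> B0"
      using B0 by simp
    moreover have "cmod (f (Complex c (Im w)) - f (Complex c 0)) \<le> M * \<bar>Im w - 0\<bar>"
      by (rule norm_diff_vertical_le[OF hol c M])
    moreover have "M * \<bar>Im w\<bar> \<le> M * cmod w"
      using M[of 0] abs_Im_le_cmod[of w] by (meson mult_left_mono norm_ge_zero order_trans)
    moreover have "cmod (f w) \<le> cmod (f w - f (Complex c (Im w)))
        + cmod (f (Complex c (Im w)) - f (Complex c 0)) + cmod (f (Complex c 0))"
      using norm_triangle_ineq[of "f w - f (Complex c (Im w))" "f (Complex c (Im w)) - f (Complex c 0)"]
        norm_triangle_ineq[of "f w - f (Complex c 0)" "f (Complex c 0)"] by simp
    ultimately show ?thesis
      by simp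
  qed
  then show ?thesis
    using that by blast
qed

lemma norm_deriv_le_deriv_line_sup_of_le:
  assumes fB: "f \<in> B_space" and x: "0 < x" and z: "x \<le> Re z"
  shows "ennreal (cmod (deriv f z)) \<le> deriv_line_sup f x"
proof (cases "deriv_line_sup f x" rule: ennreal_cases)
  case (real M)
  note hol = B_space_holomorphic[OF fB]
  obtain c where c: "0 < c" "c < x" "deriv_line_sup f c < \<infinity>"
    using B_space_deriv_line_sup_finite_below[OF fB x] .
  then obtain Mc where Mc: "deriv_line_sup f c = ennreal Mc" "0 \<le> Mc"
    by (cases "deriv_line_sup f c" rule: ennreal_cases) auto
  obtain A where "\<And>w. c \<le> Re w \<Longrightarrow> cmod (f w) \<le> A + Mc * cmod w"
    using B_space_linear_growth[OF fB c(1) norm_deriv_le_of_deriv_line_sup_eq[OF Mc]] by auto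
  then obtain A' B' where growth': "\<And>w. x \<le> Re w \<Longrightarrow> cmod (deriv f w) \<le> A' + B' * cmod w"
    using deriv_linear_growth[OF hol c(1,2) Mc(2)] by metis
  have "cmod (deriv f z) \<le> M"
    by (rule Phragmen_Lindelof_half_plane[OF holomorphic_on_deriv_C_plus[OF hol] open_C_plus _ growth' _ z])
      (use x real in \<open>auto intro: norm_deriv_le_of_deriv_line_sup_eq\<close>)
  then show ?thesis
    using real by simp
qed simp

lemma deriv_line_sup_antimono:
  assumes "f \<in> B_space" "0 < x" "x \<le> x'"
  shows "deriv_line_sup f x' \<le> deriv_line_sup f x"
  unfolding deriv_line_sup_def[of f x']
  by (rule SUP_least) (use assms in \<open>auto intro: norm_deriv_le_deriv_line_sup_of_le\<close>)

lemma norm_higher_deriv_le_deriv_line_sup: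
  assumes fB: "f \<in> B_space" and x: "0 < x" and r: "0 < r" and u: "x + r \<le> Re u"
  shows "ennreal (cmod ((deriv ^^ n) (deriv f) u)) \<le> ennreal (fact n / r ^ n) * deriv_line_sup f x"
proof (rule ennreal_le_mult_of_finite)
  show "0 < fact n / r ^ n"
    using r by simp
  fix K assume K: "0 \<le> K" "deriv_line_sup f x = ennreal K"
  note hol = B_space_holomorphic[OF fB]
  have "cmod ((deriv ^^ n) (deriv f) u) \<le> fact n * K / r ^ n"
  proof (rule norm_higher_deriv_le_C_plus[OF holomorphic_on_deriv_C_plus[OF hol] r])
    show "r < Re u"
      using x u by simp
    fix v assume "cmod (u - v) = r"
    then have "x \<le> Re v"
      using Re_ge_of_norm_diff_le[of u v r] u by simp
    then have "ennreal (cmod (deriv f v)) \<le> ennreal K"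
      using norm_deriv_le_deriv_line_sup_of_le[OF fB x] K(2) by metis
    then show "cmod (deriv f v) \<le> K"
      using K(1) by simp
  qed
  then show "cmod ((deriv ^^ n) (deriv f) u) \<le> fact n / r ^ n * K"
    by simp
qed

lemma B0_norm_le_cmult:
  assumes hol: "f holomorphic_on C_plus"
    and bound: "\<And>z. 0 < Re z \<Longrightarrow> ennreal (cmod (deriv g z)) \<le> ennreal C * deriv_line_sup f (Re z)"
  shows "B0_norm g \<le> ennreal C * B0_norm f"
proof -
  have "deriv_line_sup g x * indicator {0<..} x \<le> ennreal C * (deriv_line_sup f x * indicator {0<..} x)"
    for x :: real
  proof (cases "0 < x")
    case True
    have "deriv_line_sup g x \<le> ennreal C * deriv_line_sup f x"
      unfolding deriv_line_sup_def[of g x] using bound[of "Complex x _"] True by (auto intro: SUP_least)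
    then show ?thesis
      using True by simp
  qed simp
  then have "B0_norm g \<le> (\<integral>\<^sup>+ x. ennreal C * (deriv_line_sup f x * indicator {0<..} x) \<partial>lborel)"
    unfolding B0_norm_eq_nn_integral_deriv_line_sup by (rule nn_integral_mono)
  also have "\<dots> = ennreal C * B0_norm f"
    unfolding B0_norm_eq_nn_integral_deriv_line_sup
    by (rule nn_integral_cmult) (use borel_measurable_deriv_line_sup[OF hol, of "{0<..}"] in simp)
  finally show ?thesis .
qed

lemma B_norm_ge_sup: "z \<in> C_plus \<Longrightarrow> ennreal (cmod (f z)) \<le> B_norm f"
  unfolding B_norm_def by (rule order_trans[OF SUP_upper[of z C_plus]]) simp_all

lemma B_norm_ge_B0_norm: "B0_norm f \<le> B_norm f"
  unfolding B_norm_def by simp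

section \<open>Translations are contractions\<close>

lemma B0_norm_T_B_le:
  assumes fB: "f \<in> B_space" and a: "0 < Re a"
  shows "B0_norm (T_B a f) \<le> B0_norm f"
proof -
  note hol = B_space_holomorphic[OF fB]
  have "B0_norm (T_B a f) \<le> ennreal 1 * B0_norm f"
  proof (rule B0_norm_le_cmult[OF hol])
    fix z :: complex assume z: "0 < Re z"
    have "deriv (T_B a f) z = deriv f (z + a)"
      unfolding T_B_def by (rule deriv_shift[OF hol]) (use z a in simp)
    moreover have "ennreal (cmod (deriv f (z + a))) \<le> deriv_line_sup f (Re z)"
      by (rule norm_deriv_le_deriv_line_sup_of_le[OF fB z]) (use a in simp)
    ultimately show "ennreal (cmod (deriv (T_B a f) z)) \<le> ennreal 1 * deriv_line_sup f (Re z)"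
      by simp
  qed
  then show ?thesis
    by simp
qed

lemma T_B_in_B_space:
  assumes fB: "f \<in> B_space" and a: "0 < Re a"
  shows "T_B a f \<in> B_space"
proof -
  have "T_B a f holomorphic_on C_plus"
    unfolding T_B_def by (rule holomorphic_on_shift) (use fB a in \<open>auto simp: B_space_def\<close>)
  moreover have "B0_norm (T_B a f) < \<infinity>"
    using B0_norm_T_B_le[OF fB a] fB by (simp add: B_space_def order_le_less_trans)
  ultimately show ?thesis
    by (simp add: B_space_def)
qed

lemma B_norm_T_B_le:
  assumes fB: "f \<in> B_space" and a: "0 < Re a"
  shows "B_norm (T_B a f) \<le> B_norm f"
proof -
  have "(SUP z\<in>C_plus. ennreal (cmod (T_B a f z))) \<le> (SUP z\<in>C_plus. ennreal (cmod (f z)))"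
    unfolding T_B_def by (rule SUP_least) (use a in \<open>auto intro: SUP_upper\<close>)
  then show ?thesis
    unfolding B_norm_def by (rule add_mono[OF _ B0_norm_T_B_le[OF fB a]])
qed

section \<open>Holomorphy in operator norm\<close>

lemma deriv_shift_in_B_space:
  assumes fB: "f \<in> B_space" and a: "0 < Re a"
  shows "(\<lambda>z. deriv f (z + a)) \<in> B_space"
proof -
  note hol = B_space_holomorphic[OF fB]
  have "B0_norm (\<lambda>z. deriv f (z + a)) \<le> ennreal (2 / Re a) * B0_norm f"
  proof (rule B0_norm_le_cmult[OF hol])
    fix z :: complex assume z: "0 < Re z"
    have "deriv (\<lambda>z. deriv f (z + a)) z = (deriv ^^ 1) (deriv f) (z + a)"
      using deriv_shift[OF holomorphic_on_deriv_C_plus[OF hol]] z a by simp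
    moreover have "ennreal (cmod ((deriv ^^ 1) (deriv f) (z + a)))
        \<le> ennreal (fact 1 / (Re a / 2) ^ 1) * deriv_line_sup f (Re z)"
      by (rule norm_higher_deriv_le_deriv_line_sup[OF fB z]) (use a in auto)
    ultimately show "ennreal (cmod (deriv (\<lambda>z. deriv f (z + a)) z))
        \<le> ennreal (2 / Re a) * deriv_line_sup f (Re z)"
      by simp
  qed
  also have "\<dots> < \<infinity>"
    using fB by (simp add: B_space_def ennreal_mult_less_top)
  moreover have "(\<lambda>z. deriv f (z + a)) holomorphic_on C_plus"
    by (rule holomorphic_on_shift[OF holomorphic_on_deriv_C_plus[OF hol]]) (use a in simp)
  ultimately show ?thesis
    by (simp add: B_space_def)
qed

lemma norm_difference_quotient_shift_le:
  assumes hol: "f holomorphic_on C_plus" and M: "\<And>z. 0 < Re z \<Longrightarrow> cmod (f z) \<le> M"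
    and a0: "0 < Re a0" and h: "0 < cmod (a - a0)" "cmod (a - a0) < Re a0 / 4" and z: "0 < Re z"
  shows "cmod ((f (z + a) - f (z + a0)) / (a - a0) - deriv f (z + a0))
    \<le> 32 * M * cmod (a - a0) / (Re a0)\<^sup>2"
proof -
  define \<delta> where "\<delta> = Re a0"
  define w where "w = z + a0"
  have ball: "ball w (\<delta> / 4) \<subseteq> C_plus"
    by (rule ball_subset_C_plus) (use z a0 in \<open>simp add: w_def \<delta>_def\<close>)
  have "cmod ((f (w + (a - a0)) - f w) / (a - a0) - deriv f w) \<le> 32 * M / \<delta>\<^sup>2 * cmod (a - a0)"
  proof (rule norm_difference_quotient_minus_deriv_le[OF holomorphic_on_subset[OF hol ball]])
    fix u assume "u \<in> ball w (\<delta> / 4)"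
    then have u: "3 * \<delta> / 4 \<le> Re u"
      using Re_ge_of_norm_diff_le[of w u "\<delta> / 4"] z by (simp add: w_def \<delta>_def dist_norm)
    have "cmod ((deriv ^^ 2) f u) \<le> fact 2 * M / (\<delta> / 4) ^ 2"
    proof (rule norm_higher_deriv_le_C_plus[OF hol])
      fix v assume "cmod (u - v) = \<delta> / 4"
      then have "0 < Re v"
        using Re_ge_of_norm_diff_le[of u v "\<delta> / 4"] u a0 by (simp add: \<delta>_def)
      then show "cmod (f v) \<le> M"
        by (rule M)
    qed (use u a0 in \<open>simp_all add: \<delta>_def\<close>)
    then show "cmod (deriv (deriv f) u) \<le> 32 * M / \<delta>\<^sup>2"
      by (simp add: numeral_2_eq_2 power2_eq_square)
  qed (use h in \<open>simp_all add: \<delta>_def\<close>)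
  then show ?thesis
    by (simp add: w_def \<delta>_def)
qed

lemma B0_norm_difference_quotient_shift_le:
  assumes fB: "f \<in> B_space" and a0: "0 < Re a0" and h: "0 < cmod (a - a0)" "cmod (a - a0) < Re a0 / 4"
  shows "B0_norm (\<lambda>z. (f (z + a) - f (z + a0)) / (a - a0) - deriv f (z + a0))
    \<le> ennreal (32 * cmod (a - a0) / (Re a0)\<^sup>2) * B0_norm f"
proof (rule B0_norm_le_cmult)
  show hol: "f holomorphic_on C_plus"
    using fB by (rule B_space_holomorphic)
  define \<delta> where "\<delta> = Re a0"
  fix z :: complex assume z: "0 < Re z"
  define w where "w = z + a0"
  have a: "0 < Re a"
    using h a0 Re_ge_of_norm_diff_le[of a0 a "cmod (a - a0)"] by (simp add: norm_minus_commute)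
  have ball: "ball w (\<delta> / 4) \<subseteq> C_plus"
    by (rule ball_subset_C_plus) (use z a0 in \<open>simp add: w_def \<delta>_def\<close>)
  show "ennreal (cmod (deriv (\<lambda>z. (f (z + a) - f (z + a0)) / (a - a0) - deriv f (z + a0)) z))
      \<le> ennreal (32 * cmod (a - a0) / (Re a0)\<^sup>2) * deriv_line_sup f (Re z)"
  proof (rule ennreal_le_mult_of_finite)
    show "0 < 32 * cmod (a - a0) / (Re a0)\<^sup>2"
      using a0 h by (intro divide_pos_pos) auto
    fix K assume K: "0 \<le> K" "deriv_line_sup f (Re z) = ennreal K"
    have "cmod ((deriv f (w + (a - a0)) - deriv f w) / (a - a0) - deriv (deriv f) w)
        \<le> 32 * K / \<delta>\<^sup>2 * cmod (a - a0)"
    proof (rule norm_difference_quotient_minus_deriv_le)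
      show "deriv f holomorphic_on ball w (\<delta> / 4)"
        using holomorphic_on_deriv_C_plus[OF hol] ball by (rule holomorphic_on_subset)
      fix u assume "u \<in> ball w (\<delta> / 4)"
      then have "Re z + \<delta> / 4 \<le> Re u"
        using Re_ge_of_norm_diff_le[of w u "\<delta> / 4"] a0 by (simp add: w_def \<delta>_def dist_norm)
      then have "ennreal (cmod ((deriv ^^ 2) (deriv f) u)) \<le> ennreal (fact 2 / (\<delta> / 4) ^ 2) * ennreal K"
        using norm_higher_deriv_le_deriv_line_sup[OF fB z, of "\<delta> / 4" u 2] a0 K(2) by (simp add: \<delta>_def)
      then have "cmod ((deriv ^^ 2) (deriv f) u) \<le> fact 2 / (\<delta> / 4) ^ 2 * K"
        using K(1) a0 by (simp add: ennreal_mult[symmetric] \<delta>_def)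
      then show "cmod (deriv (deriv (deriv f)) u) \<le> 32 * K / \<delta>\<^sup>2"
        by (simp add: numeral_2_eq_2 power2_eq_square)
    qed (use h in \<open>simp_all add: \<delta>_def\<close>)
    then show "cmod (deriv (\<lambda>z. (f (z + a) - f (z + a0)) / (a - a0) - deriv f (z + a0)) z)
        \<le> 32 * cmod (a - a0) / (Re a0)\<^sup>2 * K"
      by (simp add: deriv_difference_quotient_shift[OF hol z a a0] w_def \<delta>_def mult_ac)
  qed
qed

lemma B_opnorm_difference_quotient_T_B_le:
  assumes a0: "0 < Re a0" and h: "0 < cmod (a - a0)" "cmod (a - a0) < Re a0 / 4"
  shows "B_opnorm (\<lambda>f z. (T_B a f z - T_B a0 f z) / (a - a0) - deriv f (z + a0))
    \<le> ennreal (64 * cmod (a - a0) / (Re a0)\<^sup>2)"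
  unfolding B_opnorm_def
proof (rule SUP_least)
  define C where "C = 32 * cmod (a - a0) / (Re a0)\<^sup>2"
  have C: "0 \<le> C"
    by (simp add: C_def)
  fix f assume "f \<in> {f \<in> B_space. B_norm f \<le> 1}"
  then have fB: "f \<in> B_space" and f1: "B_norm f \<le> 1"
    by auto
  define Q where "Q z = (f (z + a) - f (z + a0)) / (a - a0) - deriv f (z + a0)" for z
  have "cmod (f z) \<le> 1" if "0 < Re z" for z
    using order_trans[OF B_norm_ge_sup f1, of z] that by simp
  then have "cmod (Q z) \<le> C" if "0 < Re z" for z
    using norm_difference_quotient_shift_le[OF B_space_holomorphic[OF fB], of 1, OF _ a0 h that]
    by (simp add: Q_def C_def)
  then have "(SUP z\<in>C_plus. ennreal (cmod (Q z))) \<le> ennreal C"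
    by (auto intro!: SUP_least ennreal_leI)
  moreover have "B0_norm Q \<le> ennreal C"
  proof -
    have "B0_norm Q \<le> ennreal C * B0_norm f"
      using B0_norm_difference_quotient_shift_le[OF fB a0 h] by (simp add: Q_def[abs_def] C_def)
    also have "\<dots> \<le> ennreal C * 1"
      using B_norm_ge_B0_norm f1 by (intro mult_left_mono) (auto intro: order_trans)
    finally show ?thesis
      by simp
  qed
  ultimately have "B_norm Q \<le> ennreal C + ennreal C"
    unfolding B_norm_def by (rule add_mono)
  also have "\<dots> = ennreal (64 * cmod (a - a0) / (Re a0)\<^sup>2)"
    using C by (simp add: C_def flip: ennreal_plus)
  finally show "B_norm (\<lambda>z. (T_B a f z - T_B a0 f z) / (a - a0) - deriv f (z + a0))
      \<le> ennreal (64 * cmod (a - a0) / (Re a0)\<^sup>2)"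
    by (simp add: Q_def[abs_def] T_B_def)
qed

lemma T_B_opnorm_differentiable:
  assumes a0: "0 < Re a0"
  shows "((\<lambda>a. B_opnorm (\<lambda>f z. (T_B a f z - T_B a0 f z) / (a - a0) - deriv f (z + a0))) \<longlongrightarrow> 0)
    (at a0 within C_plus)"
proof (rule tendsto_sandwich[OF _ _ tendsto_const])
  let ?F = "at a0 within C_plus"
  show "\<forall>\<^sub>F a in ?F. 0 \<le> B_opnorm (\<lambda>f z. (T_B a f z - T_B a0 f z) / (a - a0) - deriv f (z + a0))"
    by simp
  show "\<forall>\<^sub>F a in ?F. B_opnorm (\<lambda>f z. (T_B a f z - T_B a0 f z) / (a - a0) - deriv f (z + a0))
      \<le> ennreal (64 * cmod (a - a0) / (Re a0)\<^sup>2)"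
    unfolding eventually_at
  proof (intro exI conjI ballI impI)
    show "0 < Re a0 / 4"
      using a0 by simp
    fix a assume "a \<in> C_plus" "a \<noteq> a0 \<and> dist a a0 < Re a0 / 4"
    then show "B_opnorm (\<lambda>f z. (T_B a f z - T_B a0 f z) / (a - a0) - deriv f (z + a0))
        \<le> ennreal (64 * cmod (a - a0) / (Re a0)\<^sup>2)"
      by (intro B_opnorm_difference_quotient_T_B_le a0) (auto simp: dist_norm)
  qed
  have "((\<lambda>a. 64 * cmod (a - a0) / (Re a0)\<^sup>2) \<longlongrightarrow> 64 * cmod (a0 - a0) / (Re a0)\<^sup>2) ?F"
    using a0 by (intro tendsto_intros) auto
  then show "((\<lambda>a. ennreal (64 * cmod (a - a0) / (Re a0)\<^sup>2)) \<longlongrightarrow> 0) ?F"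
    using tendsto_ennrealI by fastforce
qed

section \<open>Strong continuity on sectors\<close>

definition B0_norm_upto :: "(complex \<Rightarrow> complex) \<Rightarrow> real \<Rightarrow> ennreal" where
  "B0_norm_upto f e = (\<integral>\<^sup>+ x \<in> {0<..e}. deriv_line_sup f x \<partial>lborel)"

lemma B0_norm_upto_mono: "e \<le> e' \<Longrightarrow> B0_norm_upto f e \<le> B0_norm_upto f e'"
  unfolding B0_norm_upto_def by (intro nn_integral_mono) (auto simp: indicator_def)

lemma deriv_line_sup_mult_le_B0_norm_upto:
  assumes fB: "f \<in> B_space" and s: "0 < s"
  shows "deriv_line_sup f s * ennreal s \<le> B0_norm_upto f s"
proof -
  have "deriv_line_sup f s * ennreal s = (\<integral>\<^sup>+ x. deriv_line_sup f s * indicator {0<..s} x \<partial>lborel)"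
    using s by (simp add: nn_integral_cmult_indicator)
  also have "\<dots> \<le> B0_norm_upto f s"
    unfolding B0_norm_upto_def
    by (intro nn_integral_mono) (auto simp: indicator_def intro: deriv_line_sup_antimono[OF fB])
  finally show ?thesis .
qed

lemma nn_integral_deriv_line_sup_interval_le:
  assumes fB: "f \<in> B_space" and x: "0 < x" and s: "0 < s"
  shows "(\<integral>\<^sup>+ t\<in>{x..x + s}. deriv_line_sup f t \<partial>lborel) \<le> B0_norm_upto f (2 * s)"
proof (cases "s \<le> x")
  case True
  have "(\<integral>\<^sup>+ t\<in>{x..x + s}. deriv_line_sup f t \<partial>lborel)
      \<le> (\<integral>\<^sup>+ t. deriv_line_sup f s * indicator {x..x + s} t \<partial>lborel)"
    by (intro nn_integral_mono) (use True s in \<open>auto simp: indicator_def intro: deriv_line_sup_antimono[OF fB]\<close>)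
  also have "\<dots> = deriv_line_sup f s * ennreal s"
    using s by (simp add: nn_integral_cmult_indicator)
  also have "\<dots> \<le> B0_norm_upto f (2 * s)"
    using deriv_line_sup_mult_le_B0_norm_upto[OF fB s] B0_norm_upto_mono[of s "2 * s" f] s by simp
  finally show ?thesis .
next
  case False
  then show ?thesis
    unfolding B0_norm_upto_def using x by (intro nn_integral_mono) (auto simp: indicator_def)
qed

lemma INF_B0_norm_upto_eq_0:
  assumes fB: "f \<in> B_space" and S: "decseq S" "S \<longlonglongrightarrow> 0"
  shows "(INF n. B0_norm_upto f (S n)) = 0"
proof -
  define G where "G n x = deriv_line_sup f x * indicator {0<..S n} x" for n x
  note hol = B_space_holomorphic[OF fB]
  have "decseq G"
  proof (intro decseq_SucI le_funI)
    fix n x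
    show "G (Suc n) x \<le> G n x"
      using decseqD[OF S(1), of n "Suc n"] by (auto simp: G_def indicator_def)
  qed
  moreover have "G n \<in> borel_measurable lborel" for n
    unfolding G_def measurable_lborel2 by (rule borel_measurable_deriv_line_sup[OF hol]) auto
  moreover have "(\<integral>\<^sup>+ x. G n x \<partial>lborel) < \<infinity>" for n
  proof -
    have "(\<integral>\<^sup>+ x. G n x \<partial>lborel) \<le> B0_norm f"
      unfolding G_def B0_norm_eq_nn_integral_deriv_line_sup
      by (intro nn_integral_mono) (auto simp: indicator_def)
    then show ?thesis
      using fB by (simp add: B_space_def order_le_less_trans)
  qed
  ultimately have "(INF n. B0_norm_upto f (S n)) = (\<integral>\<^sup>+ x. (INF n. G n x) \<partial>lborel)"
    unfolding B0_norm_upto_def G_def by (rule nn_integral_monotone_convergence_INF_decseq[symmetric])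
  moreover have "(INF n. G n x) = 0" for x
  proof (cases "0 < x")
    case True
    then obtain n where "S n < x"
      using order_tendstoD(2)[OF S(2) True] by (auto simp: eventually_sequentially)
    then show ?thesis
      using INF_lower[of n UNIV "\<lambda>n. G n x"] by (simp add: G_def)
  next
    case False
    then show ?thesis
      using INF_lower[of 0 UNIV "\<lambda>n. G n x"] by (simp add: G_def)
  qed
  ultimately show ?thesis
    by simp
qed

lemma tendsto_B0_norm_upto:
  assumes fB: "f \<in> B_space" and g: "(g \<longlongrightarrow> 0) F" "\<forall>\<^sub>F y in F. 0 < g y"
  shows "((\<lambda>y. B0_norm_upto f (g y)) \<longlongrightarrow> 0) F"
proof -
  have "(B0_norm_upto f \<longlongrightarrow> 0) (at_right 0)"
  proof (rule tendsto_at_right_sequentially[of 0 1])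
    fix S :: "nat \<Rightarrow> real"
    assume S: "decseq S" "S \<longlonglongrightarrow> 0"
    then have "decseq (\<lambda>n. B0_norm_upto f (S n))"
      by (simp add: decseq_def B0_norm_upto_mono)
    then show "(\<lambda>n. B0_norm_upto f (S n)) \<longlonglongrightarrow> 0"
      using LIMSEQ_INF INF_B0_norm_upto_eq_0[OF fB S] by fastforce
  qed simp
  then show ?thesis
    using filterlim_compose tendsto_imp_filterlim_at_right[OF g] by blast
qed

lemma sector_Re_bound:
  assumes a: "a \<in> sector \<psi>" and \<psi>: "\<psi> < pi / 2"
  shows "0 < Re a" "cmod a \<le> 1 / cos \<psi> * Re a"
proof -
  have a0: "a \<noteq> 0" and arg: "\<bar>Arg a\<bar> < \<psi>"
    using a by (auto simp: sector_def)
  have "cos \<psi> \<le> cos \<bar>Arg a\<bar>"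
    by (rule cos_monotone_0_pi_le) (use arg \<psi> in auto)
  also have "\<dots> = Re a / cmod a"
    using a0 by (simp add: cos_Arg)
  finally have le: "cmod a * cos \<psi> \<le> Re a"
    using a0 by (simp add: le_divide_eq mult.commute)
  have cos: "0 < cos \<psi>"
    by (rule cos_gt_zero_pi) (use arg \<psi> in auto)
  then show "0 < Re a"
    using le a0 by (smt (verit) mult_pos_pos zero_less_norm_iff)
  show "cmod a \<le> 1 / cos \<psi> * Re a"
    using le cos by (simp add: field_simps)
qed

lemma norm_shift_vertical_le:
  assumes fB: "f \<in> B_space" and z: "0 < Re z" and a: "0 < Re a"
  shows "ennreal (cmod (f (z + a) - f (z + of_real (Re a)))) \<le> ennreal (cmod a) * deriv_line_sup f (Re a)"
proof (rule ennreal_le_mult_of_finite)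
  show "0 < cmod a"
    using a by auto
  fix K assume K: "0 \<le> K" "deriv_line_sup f (Re a) = ennreal K"
  have "cmod (deriv f (Complex (Re z + Re a) y)) \<le> K" for y
    using norm_deriv_le_deriv_line_sup_of_le[OF fB a, of "Complex (Re z + Re a) y"] K z by simp
  then have "cmod (f (Complex (Re z + Re a) (Im z + Im a)) - f (Complex (Re z + Re a) (Im z))) \<le> K * \<bar>Im a\<bar>"
    using norm_diff_vertical_le[of f "Re z + Re a" K "Im z + Im a" "Im z"] fB z a by (simp add: B_space_def)
  also have "\<dots> \<le> cmod a * K"
    using K(1) abs_Im_le_cmod mult_left_mono by (metis mult.commute)
  moreover have "Complex (Re z + Re a) (Im z + Im a) = z + a" "Complex (Re z + Re a) (Im z) = z + of_real (Re a)"
    by (simp_all add: complex_eq_iff)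
  ultimately show "cmod (f (z + a) - f (z + of_real (Re a))) \<le> cmod a * K"
    by simp
qed

lemma norm_shift_diff_le:
  assumes fB: "f \<in> B_space" and a: "0 < Re a" and L: "cmod a \<le> L * Re a" and z: "0 < Re z"
  shows "ennreal (cmod (f (z + a) - f z)) \<le> ennreal L * B0_norm_upto f (Re a) + B0_norm_upto f (2 * Re a)"
proof -
  define s where "s = Re a"
  have s: "0 < s"
    using a by (simp add: s_def)
  have L0: "0 \<le> L"
    using order_trans[OF norm_ge_zero L] a by (simp add: zero_le_mult_iff)
  have "ennreal (cmod (f (z + a) - f (z + of_real s))) \<le> ennreal (L * s) * deriv_line_sup f s"
    using norm_shift_vertical_le[OF fB z a] order_trans[OF _ mult_right_mono[OF ennreal_leI[OF L]]]
    by (simp add: s_def)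
  also have "\<dots> = ennreal L * (deriv_line_sup f s * ennreal s)"
    using L0 s by (subst ennreal_mult) (auto simp: mult_ac)
  also have "\<dots> \<le> ennreal L * B0_norm_upto f s"
    by (intro mult_left_mono deriv_line_sup_mult_le_B0_norm_upto[OF fB s]) simp
  finally have vertical: "ennreal (cmod (f (z + a) - f (z + of_real s))) \<le> ennreal L * B0_norm_upto f s" .
  have "ennreal (cmod (f (Complex (Re z + s) (Im z)) - f z))
      \<le> (\<integral>\<^sup>+ t\<in>{Re z..Re z + s}. deriv_line_sup f t \<partial>lborel)"
    using norm_diff_horizontal_le[of f "Re z" "Re z + s" "Im z"] fB z s by (simp add: B_space_def)
  also have "\<dots> \<le> B0_norm_upto f (2 * s)"
    by (rule nn_integral_deriv_line_sup_interval_le[OF fB z s])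
  moreover have "Complex (Re z + s) (Im z) = z + of_real s"
    by (simp add: complex_eq_iff)
  ultimately have horizontal: "ennreal (cmod (f (z + of_real s) - f z)) \<le> B0_norm_upto f (2 * s)"
    by simp
  have "cmod (f (z + a) - f z) \<le> cmod (f (z + a) - f (z + of_real s)) + cmod (f (z + of_real s) - f z)"
    using norm_triangle_ineq[of "f (z + a) - f (z + of_real s)" "f (z + of_real s) - f z"] by simp
  then have "ennreal (cmod (f (z + a) - f z))
      \<le> ennreal (cmod (f (z + a) - f (z + of_real s))) + ennreal (cmod (f (z + of_real s) - f z))"
    by (simp flip: ennreal_plus)
  also have "\<dots> \<le> ennreal L * B0_norm_upto f s + B0_norm_upto f (2 * s)"
    by (rule add_mono[OF vertical horizontal])
  finally show ?thesis
    by (simp add: s_def)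
qed

lemma deriv_line_sup_shift_diff_le:
  assumes fB: "f \<in> B_space" and a: "0 < Re a" and x: "0 < x"
  shows "deriv_line_sup (\<lambda>z. f (z + a) - f z) x \<le> 2 * deriv_line_sup f x"
  unfolding deriv_line_sup_def[of "\<lambda>z. f (z + a) - f z"]
proof (rule SUP_least)
  fix y
  define z where "z = Complex x y"
  note hol = B_space_holomorphic[OF fB]
  have "ennreal (cmod (deriv f (z + a) - deriv f z))
      \<le> ennreal (cmod (deriv f (z + a))) + ennreal (cmod (deriv f z))"
    using norm_triangle_ineq4[of "deriv f (z + a)" "deriv f z"] by (simp flip: ennreal_plus)
  also have "\<dots> \<le> deriv_line_sup f x + deriv_line_sup f x"
    by (intro add_mono norm_deriv_le_deriv_line_sup_of_le[OF fB x]) (use a in \<open>simp_all add: z_def\<close>)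
  finally show "ennreal (cmod (deriv (\<lambda>z. f (z + a) - f z) (Complex x y))) \<le> 2 * deriv_line_sup f x"
    using deriv_shift_diff[OF hol, of z a] x a by (simp add: z_def mult_2)
qed

lemma deriv_line_sup_shift_diff_le_far:
  assumes fB: "f \<in> B_space" and a: "0 < Re a" and \<eta>: "0 < \<eta>" "\<eta> < x"
  shows "deriv_line_sup (\<lambda>z. f (z + a) - f z) x
    \<le> ennreal (2 * cmod a / \<eta>) * deriv_line_sup f (x - \<eta> / 2)"
  unfolding deriv_line_sup_def[of "\<lambda>z. f (z + a) - f z" x]
proof (rule SUP_least)
  fix y
  define z where "z = Complex x y"
  note hol = B_space_holomorphic[OF fB]
  show "ennreal (cmod (deriv (\<lambda>z. f (z + a) - f z) (Complex x y)))
      \<le> ennreal (2 * cmod a / \<eta>) * deriv_line_sup f (x - \<eta> / 2)"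
  proof (rule ennreal_le_mult_of_finite)
    show "0 < 2 * cmod a / \<eta>"
      using a \<eta> by (intro divide_pos_pos) auto
    fix K assume K: "0 \<le> K" "deriv_line_sup f (x - \<eta> / 2) = ennreal K"
    have "cmod (deriv f (z + a) - deriv f z) \<le> 2 / \<eta> * K * cmod ((z + a) - z)"
    proof (rule field_differentiable_bound[of "{u. x \<le> Re u}"])
      show "convex {u. x \<le> Re u}"
        by (rule convex_halfspace_Re_ge)
      fix u assume "u \<in> {u. x \<le> Re u}"
      then have u: "x \<le> Re u"
        by simp
      show "(deriv f has_field_derivative deriv (deriv f) u) (at u within {u. x \<le> Re u})"
        by (rule has_field_derivative_at_within[OF has_field_derivative_C_plus[OF holomorphic_on_deriv_C_plus[OF hol]]])
          (use u \<eta> in simp)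
      have "ennreal (cmod ((deriv ^^ 1) (deriv f) u)) \<le> ennreal (fact 1 / (\<eta> / 2) ^ 1) * ennreal K"
        using norm_higher_deriv_le_deriv_line_sup[OF fB, of "x - \<eta> / 2" "\<eta> / 2" u 1] u \<eta> K(2) by simp
      then show "cmod (deriv (deriv f) u) \<le> 2 / \<eta> * K"
        using K(1) \<eta> by (simp add: ennreal_mult[symmetric])
    qed (use a in \<open>auto simp: z_def\<close>)
    then show "cmod (deriv (\<lambda>z. f (z + a) - f z) (Complex x y)) \<le> 2 * cmod a / \<eta> * K"
      using deriv_shift_diff[OF hol, of z a] \<eta> a by (simp add: z_def mult_ac)
  qed
qed

lemma deriv_line_sup_shift_diff_split_le:
  assumes fB: "f \<in> B_space" and a: "0 < Re a" and \<eta>: "0 < \<eta>"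
  shows "deriv_line_sup (\<lambda>z. f (z + a) - f z) x * indicator {0<..} x
    \<le> 2 * (deriv_line_sup f x * indicator {0<..\<eta>} x)
      + ennreal (2 * cmod a / \<eta>) * (deriv_line_sup f (x - \<eta> / 2) * indicator {0<..} (x - \<eta> / 2))"
proof -
  consider "x \<le> 0" | "0 < x" "x \<le> \<eta>" | "\<eta> < x"
    by linarith
  then show ?thesis
  proof cases
    case 2
    then show ?thesis
      using deriv_line_sup_shift_diff_le[OF fB a, of x] by (simp add: add_increasing2)
  next
    case 3
    then show ?thesis
      using deriv_line_sup_shift_diff_le_far[OF fB a \<eta> 3] \<eta> by (simp add: add_increasing)
  qed simp
qed

text \<open>Splitting at \<eta> = sqrt |a| makes both the near part (of size the integral of G over (0, \<eta>])
  and the far part (of size (2 |a| / \<eta>) times the B0-seminorm) tend to 0 with a.\<close>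

lemma B0_norm_shift_diff_le:
  assumes fB: "f \<in> B_space" and a: "0 < Re a"
  shows "B0_norm (\<lambda>z. f (z + a) - f z)
    \<le> 2 * B0_norm_upto f (sqrt (cmod a)) + ennreal (2 * sqrt (cmod a)) * B0_norm f"
proof -
  note hol = B_space_holomorphic[OF fB]
  define \<eta> where "\<eta> = sqrt (cmod a)"
  have \<eta>: "0 < \<eta>"
    using a by (auto simp: \<eta>_def)
  have c: "2 * cmod a / \<eta> = 2 * \<eta>"
    using \<eta> by (simp add: \<eta>_def field_simps)
  define H where "H x = deriv_line_sup f x * indicator {0<..} x" for x
  have H: "H \<in> borel_measurable borel"
    using borel_measurable_deriv_line_sup[OF hol, of "{0<..}"] by (simp add: H_def[abs_def])
  have "(\<lambda>x. deriv_line_sup f x * indicator {0<..\<eta>} x) \<in> borel_measurable borel"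
    by (rule borel_measurable_deriv_line_sup[OF hol]) auto
  moreover have "(\<lambda>x::real. - (\<eta> / 2) + 1 * x) \<in> borel_measurable borel"
    by (intro borel_measurable_continuous_onI continuous_intros)
  then have "(\<lambda>x. H (- (\<eta> / 2) + 1 * x)) \<in> borel_measurable borel"
    using H by (rule measurable_compose)
  moreover have "B0_norm (\<lambda>z. f (z + a) - f z) \<le> (\<integral>\<^sup>+ x.
      2 * (deriv_line_sup f x * indicator {0<..\<eta>} x) + ennreal (2 * \<eta>) * H (- (\<eta> / 2) + 1 * x) \<partial>lborel)"
    unfolding B0_norm_eq_nn_integral_deriv_line_sup
    using deriv_line_sup_shift_diff_split_le[OF fB a \<eta>] by (intro nn_integral_mono) (simp add: H_def c)
  ultimately have "B0_norm (\<lambda>z. f (z + a) - f z)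
      \<le> 2 * B0_norm_upto f \<eta> + ennreal (2 * \<eta>) * (\<integral>\<^sup>+ x. H (- (\<eta> / 2) + 1 * x) \<partial>lborel)"
    by (simp add: nn_integral_add nn_integral_cmult B0_norm_upto_def)
  also have "(\<integral>\<^sup>+ x. H (- (\<eta> / 2) + 1 * x) \<partial>lborel) = B0_norm f"
    using nn_integral_real_affine[OF H, of 1 "- (\<eta> / 2)"]
    by (simp add: B0_norm_eq_nn_integral_deriv_line_sup H_def)
  finally show ?thesis
    by (simp add: \<eta>_def)
qed

lemma T_B_strongly_continuous_sector:
  assumes fB: "f \<in> B_space" and \<psi>: "\<psi> < pi / 2"
  shows "((\<lambda>a. B_norm (\<lambda>z. T_B a f z - f z)) \<longlongrightarrow> 0) (at 0 within sector \<psi>)"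
proof (rule tendsto_sandwich[OF _ _ tendsto_const])
  let ?F = "at 0 within sector \<psi>"
  let ?L = "1 / cos \<psi>"
  define bound where "bound a = (ennreal ?L * B0_norm_upto f (Re a) + B0_norm_upto f (2 * Re a)) +
    (2 * B0_norm_upto f (sqrt (cmod a)) + ennreal (2 * sqrt (cmod a)) * B0_norm f)" for a
  have sector: "\<forall>\<^sub>F a in ?F. a \<in> sector \<psi>"
    by (simp add: eventually_at_filter)
  show "\<forall>\<^sub>F a in ?F. 0 \<le> B_norm (\<lambda>z. T_B a f z - f z)"
    by simp
  show "\<forall>\<^sub>F a in ?F. B_norm (\<lambda>z. T_B a f z - f z) \<le> bound a"
    using sector
  proof eventually_elim
    case (elim a)
    note a = sector_Re_bound[OF elim \<psi>]
    have "(SUP z\<in>C_plus. ennreal (cmod (T_B a f z - f z)))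
        \<le> ennreal ?L * B0_norm_upto f (Re a) + B0_norm_upto f (2 * Re a)"
      unfolding T_B_def by (rule SUP_least) (use norm_shift_diff_le[OF fB a] in simp)
    then show ?case
      unfolding B_norm_def bound_def T_B_def by (rule add_mono[OF _ B0_norm_shift_diff_le[OF fB a(1)]])
  qed
  have Re: "((\<lambda>a. Re a) \<longlongrightarrow> 0) ?F" "\<forall>\<^sub>F a in ?F. 0 < Re a"
    using tendsto_Re[OF tendsto_ident_at, of 0] sector sector_Re_bound(1)[OF _ \<psi>]
    by (auto elim: eventually_mono)
  have twice_Re: "((\<lambda>a. 2 * Re a) \<longlongrightarrow> 0) ?F" "\<forall>\<^sub>F a in ?F. 0 < 2 * Re a"
    using tendsto_mult_right_zero[OF Re(1)] Re(2) by (auto elim: eventually_mono)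
  have sqrt: "((\<lambda>a. sqrt (cmod a)) \<longlongrightarrow> 0) ?F" "\<forall>\<^sub>F a in ?F. 0 < sqrt (cmod a)"
    using tendsto_real_sqrt[OF tendsto_norm_zero[OF tendsto_ident_at]] Re(2) by (auto elim: eventually_mono)
  have "((\<lambda>a. ennreal (2 * sqrt (cmod a))) \<longlongrightarrow> 0) ?F"
    using tendsto_ennrealI[OF tendsto_mult_right_zero[OF sqrt(1)]] by simp
  then have "(bound \<longlongrightarrow> (ennreal ?L * 0 + 0) + (2 * 0 + 0 * B0_norm f)) ?F"
    unfolding bound_def using fB
    by (intro tendsto_add tendsto_mult_ennreal tendsto_const tendsto_B0_norm_upto Re twice_Re sqrt)
      (auto simp: B_space_def)
  then show "(bound \<longlongrightarrow> 0) ?F"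
    by simp
qed

theorem proposition4p6:
  shows "hol_C0_contraction_semigroup_B T_B"
  unfolding hol_C0_contraction_semigroup_B_def
proof (intro conjI ballI allI impI)
  fix a f assume "a \<in> C_plus" "f \<in> B_space"
  then show "T_B a f \<in> B_space" "B_norm (T_B a f) \<le> B_norm f"
    by (simp_all add: T_B_in_B_space B_norm_T_B_le)
next
  fix a0 :: complex assume "a0 \<in> C_plus"
  then show "\<exists>D. (\<forall>f\<in>B_space. D f \<in> B_space) \<and>
      ((\<lambda>a. B_opnorm (\<lambda>f z. (T_B a f z - T_B a0 f z) / (a - a0) - D f z)) \<longlongrightarrow> 0) (at a0 within C_plus)"
    using deriv_shift_in_B_space T_B_opnorm_differentiable
    by (intro exI[of _ "\<lambda>f z. deriv f (z + a0)"]) auto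
next
  fix \<psi> f assume "0 < \<psi> \<and> \<psi> < pi / 2" "f \<in> B_space"
  then show "((\<lambda>a. B_norm (\<lambda>z. T_B a f z - f z)) \<longlongrightarrow> 0) (at 0 within sector \<psi>)"
    by (intro T_B_strongly_continuous_sector) auto
qed (simp_all add: T_B_def add.assoc)

end
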